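(* Let $\mathcal P$ be the language with a single unary predicate symbol $P$ (and crisp equality), and let $\mathbf A$ be the subalgebra of the standard Gödel chain $[0,1]_G$ with universe $\{0,\tfrac12,\tfrac34,1\}$. Let $\langle\mathbf A,\mathbf M\rangle$ and $\langle\mathbf A,\mathbf N\rangle$ be the structures with domain $\mathbb N$ and $P_{\mathbf M}(n)=\tfrac34$, $P_{\mathbf N}(n)=\tfrac12$ for all $n$. Then every $\mathcal P$-sentence has value $1$ in $\langle\mathbf A,\mathbf M\rangle$ iff it has value $1$ in $\langle\mathbf A,\mathbf N\rangle$. Let $\mathcal K$ be the class of $\mathcal P$-structures over $\mathbf A$ whose natural expansion to $\mathcal P^{\mathbf A}$ gives value $1$ to the sentence $\overline{3/4}\to(\forall x)P(x)$. Then $\mathcal K$ is closed under isomorphisms, substructures and ultraproducts, $\langle\mathbf A,\mathbf M\rangle\in\mathcal K$, $\langle\mathbf A,\mathbf N\rangle\notin\mathcal K$, and consequently $\mathcal K$ is not axiomatized by any set of universal $\mathcal P$-sentences (sentences without truth constants).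
   Context: The standard Gödel chain $[0,1]_G$ is $[0,1]$ with $x\wedge y=\min$, $x\vee y=\max$, strong conjunction $x\& y=\min(x,y)$, implication $x\to y=1$ if $x\le y$ and $y$ otherwise, and constants $0,1$. An $\mathbf{A}$-structure $\langle \mathbf A,\mathbf M\rangle$ consists of a nonempty domain $M$ and, for each $n$-ary predicate symbol, a map $M^n\to A$; equality $\approx$ is crisp (value $1$ on equal, $0$ on distinct elements). Truth values are computed Tarski-style: connectives by the operations of $\mathbf A$, $\forall$ by infimum, $\exists$ by supremum over the domain. $\mathcal P^{\mathbf A}$ is $\mathcal P$ expanded by a truth constant $\overline a$ for each $a\in A$; the natural expansion interprets $\overline a$ as $a$. Substructures are over the same $\mathbf A$: smaller domain with predicates interpreted by restriction. A class is axiomatized by a set of sentences $\Sigma$ if it consists exactly of the structures in which all sentences of $\Sigma$ have value $1$. A universal sentence has the form $(\forall\overrightarrow x)\psi$ with $\psi$ quantifier-free. *)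

theory Defs
  imports Complex_Main
begin

definition Aset :: "real set" where
  "Aset = {0, 1/2, 3/4, 1}"

definition g_imp :: "real \<Rightarrow> real \<Rightarrow> real" where
  "g_imp x y = (if x \<le> y then 1 else y)"

datatype form =
    PAtom nat
  | Eq nat nat
  | TConst real          \<comment> \<open>truth constant (only in the expanded language P^A)\<close>
  | Bot
  | Top
  | Conj form form
  | Disj form form
  | SConj form form
  | Imp form form
  | All nat form
  | Ex nat form

fun fv :: "form \<Rightarrow> nat set" where
  "fv (PAtom n) = {n}"
| "fv (Eq m n) = {m, n}"
| "fv (TConst a) = {}"
| "fv Bot = {}"
| "fv Top = {}"
| "fv (Conj a b) = fv a \<union> fv b"
| "fv (Disj a b) = fv a \<union> fv b"
| "fv (SConj a b) = fv a \<union> fv b"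
| "fv (Imp a b) = fv a \<union> fv b"
| "fv (All v a) = fv a - {v}"
| "fv (Ex v a) = fv a - {v}"

fun no_consts :: "form \<Rightarrow> bool" where
  "no_consts (TConst a) = False"
| "no_consts (Conj a b) = (no_consts a \<and> no_consts b)"
| "no_consts (Disj a b) = (no_consts a \<and> no_consts b)"
| "no_consts (SConj a b) = (no_consts a \<and> no_consts b)"
| "no_consts (Imp a b) = (no_consts a \<and> no_consts b)"
| "no_consts (All v a) = no_consts a"
| "no_consts (Ex v a) = no_consts a"
| "no_consts _ = True"

fun qfree :: "form \<Rightarrow> bool" where
  "qfree (All v a) = False"
| "qfree (Ex v a) = False"
| "qfree (Conj a b) = (qfree a \<and> qfree b)"
| "qfree (Disj a b) = (qfree a \<and> qfree b)"
| "qfree (SConj a b) = (qfree a \<and> qfree b)"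
| "qfree (Imp a b) = (qfree a \<and> qfree b)"
| "qfree _ = True"

definition sentence :: "form \<Rightarrow> bool" where
  "sentence \<phi> \<longleftrightarrow> fv \<phi> = {}"

definition P_sentence :: "form \<Rightarrow> bool" where
  "P_sentence \<phi> \<longleftrightarrow> sentence \<phi> \<and> no_consts \<phi>"

definition universal_P_sentence :: "form \<Rightarrow> bool" where
  "universal_P_sentence \<phi> \<longleftrightarrow> P_sentence \<phi> \<and>
     (\<exists>xs \<psi>. \<phi> = foldr All xs \<psi> \<and> qfree \<psi>)"

type_synonym 'a struc = "'a set \<times> ('a \<Rightarrow> real)"

definition wf_struc :: "'a struc \<Rightarrow> bool" where
  "wf_struc S \<longleftrightarrow> fst S \<noteq> {} \<and> (\<forall>x\<in>fst S. snd S x \<in> Aset)"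

fun eval :: "'a struc \<Rightarrow> (nat \<Rightarrow> 'a) \<Rightarrow> form \<Rightarrow> real" where
  "eval S e (PAtom n) = snd S (e n)"
| "eval S e (Eq m n) = (if e m = e n then 1 else 0)"
| "eval S e (TConst a) = a"
| "eval S e Bot = 0"
| "eval S e Top = 1"
| "eval S e (Conj a b) = min (eval S e a) (eval S e b)"
| "eval S e (Disj a b) = max (eval S e a) (eval S e b)"
| "eval S e (SConj a b) = min (eval S e a) (eval S e b)"
| "eval S e (Imp a b) = g_imp (eval S e a) (eval S e b)"
| "eval S e (All v a) = (INF x\<in>fst S. eval S (e(v := x)) a)"
| "eval S e (Ex v a) = (SUP x\<in>fst S. eval S (e(v := x)) a)"

definition models :: "'a struc \<Rightarrow> form \<Rightarrow> bool" where
  "models S \<phi> \<longleftrightarrow> (\<forall>e. (\<forall>n. e n \<in> fst S) \<longrightarrow> eval S e \<phi> = 1)"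

definition isomorphic :: "'a struc \<Rightarrow> 'b struc \<Rightarrow> bool" where
  "isomorphic S T \<longleftrightarrow> (\<exists>f. bij_betw f (fst S) (fst T) \<and> (\<forall>x\<in>fst S. snd T (f x) = snd S x))"

definition substructure :: "'a struc \<Rightarrow> 'a struc \<Rightarrow> bool" where
  "substructure T S \<longleftrightarrow> fst T \<noteq> {} \<and> fst T \<subseteq> fst S \<and> (\<forall>x\<in>fst T. snd T x = snd S x)"

definition ultrafilter_on :: "'i set \<Rightarrow> 'i set set \<Rightarrow> bool" where
  "ultrafilter_on I U \<longleftrightarrow>
     U \<subseteq> Pow I \<and> I \<in> U \<and> {} \<notin> U \<and>
     (\<forall>X Y. X \<in> U \<and> X \<subseteq> Y \<and> Y \<subseteq> I \<longrightarrow> Y \<in> U) \<and>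
     (\<forall>X Y. X \<in> U \<and> Y \<in> U \<longrightarrow> X \<inter> Y \<in> U) \<and>
     (\<forall>X. X \<subseteq> I \<longrightarrow> X \<in> U \<or> I - X \<in> U)"

definition up_rel :: "'i set \<Rightarrow> 'i set set \<Rightarrow> ('i \<Rightarrow> 'a) \<Rightarrow> ('i \<Rightarrow> 'a) \<Rightarrow> bool" where
  "up_rel I U f g \<longleftrightarrow> {i \<in> I. f i = g i} \<in> U"

definition up_dom :: "'i set \<Rightarrow> 'i set set \<Rightarrow> ('i \<Rightarrow> 'a struc) \<Rightarrow> ('i \<Rightarrow> 'a) set set" where
  "up_dom I U S =
     (let Pr = {f. \<forall>i\<in>I. f i \<in> fst (S i)} in {{g \<in> Pr. up_rel I U f g} | f. f \<in> Pr})"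

text \<open>Ultraproduct over the finite algebra A: A^I/U is canonically A, so the value
  of P at a class [f] is the U-limit of the values P_i(f i).\<close>
definition up_pred :: "'i set \<Rightarrow> 'i set set \<Rightarrow> ('i \<Rightarrow> 'a struc) \<Rightarrow> ('i \<Rightarrow> 'a) set \<Rightarrow> real" where
  "up_pred I U S c = (THE a. a \<in> Aset \<and> (\<exists>f\<in>c. {i \<in> I. snd (S i) (f i) = a} \<in> U))"

definition ultraproduct :: "'i set \<Rightarrow> 'i set set \<Rightarrow> ('i \<Rightarrow> 'a struc) \<Rightarrow> ('i \<Rightarrow> 'a) set struc" where
  "ultraproduct I U S = (up_dom I U S, up_pred I U S)"

definition StrM :: "nat struc" where "StrM = (UNIV, \<lambda>n. 3/4)"
definition StrN :: "nat struc" where "StrN = (UNIV, \<lambda>n. 1/2)"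

definition phi0 :: form where "phi0 = Imp (TConst (3/4)) (All 0 (PAtom 0))"

definition classK :: "'a struc \<Rightarrow> bool" where
  "classK S \<longleftrightarrow> wf_struc S \<and> models S phi0"

definition axiomatized_by :: "('a struc \<Rightarrow> bool) \<Rightarrow> form set \<Rightarrow> bool" where
  "axiomatized_by K \<Sigma> \<longleftrightarrow> (\<forall>S. wf_struc S \<longrightarrow> (K S \<longleftrightarrow> (\<forall>\<phi>\<in>\<Sigma>. models S \<phi>)))"

end

theory Submission
  imports Defs
begin

text \<open>The map \<open>rescale\<close>, sending \<open>0, 3/4, 1\<close> to \<open>0, 1/2, 1\<close>, is an order embedding of \<open>[0,1]\<close>
  fixing \<open>0\<close> and \<open>1\<close>, hence commutes with min, max, Goedel implication and finite infima and
  suprema. Without truth constants the values in \<open>N\<close> are therefore the rescaled values in \<open>M\<close>,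
  and the value \<open>1\<close> is reached in one structure exactly when it is reached in the other;
  so \<open>M\<close> and \<open>N\<close> satisfy the same sentences without truth constants. The constant \<open>3/4\<close> distinguishes them:
  \<open>3/4 \<rightarrow> (\<forall>x)P(x)\<close> just says that \<open>P\<close> takes only values \<open>\<ge> 3/4\<close>, a condition inherited by
  isomorphic copies, substructures and ultraproducts, true in \<open>M\<close> and false in \<open>N\<close>.\<close>

definition rescale :: "real \<Rightarrow> real" where
  "rescale x = (if x \<le> 3/4 then 2/3 * x else 2 * x - 1)"

lemma rescale_le_iff [simp]: "rescale x \<le> rescale y \<longleftrightarrow> x \<le> y"
  unfolding rescale_def by auto

lemma rescale_eq_iff [simp]: "rescale x = rescale y \<longleftrightarrow> x = y"
  by (metis order.antisym order_refl rescale_le_iff)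

lemma rescale_0 [simp]: "rescale 0 = 0"
  and rescale_1 [simp]: "rescale 1 = 1"
  and rescale_3_4 [simp]: "rescale (3/4) = 1/2"
  unfolding rescale_def by auto

lemma mono_rescale: "mono rescale"
  by (simp add: monoI)

lemma rescale_min: "rescale (min a b) = min (rescale a) (rescale b)"
  by (simp add: min_def)

lemma rescale_max: "rescale (max a b) = max (rescale a) (rescale b)"
  by (simp add: max_def)

lemma rescale_g_imp: "rescale (g_imp a b) = g_imp (rescale a) (rescale b)"
  by (simp add: g_imp_def)

lemma rescale_Inf: "finite F \<Longrightarrow> F \<noteq> {} \<Longrightarrow> Inf (rescale ` F) = rescale (Inf F)"
  by (simp add: cInf_eq_Min mono_Min_commute[OF mono_rescale])

lemma rescale_Sup: "finite F \<Longrightarrow> F \<noteq> {} \<Longrightarrow> Sup (rescale ` F) = rescale (Sup F)"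
  by (simp add: cSup_eq_Max mono_Max_commute[OF mono_rescale])

lemma finite_range_of_three_values: "(\<And>x. f x \<in> {0, 3/4, 1 :: real}) \<Longrightarrow> finite (range f)"
  by (rule finite_subset[of _ "{0, 3/4, 1}"]) blast+

lemma eval_StrM_range: "no_consts \<phi> \<Longrightarrow> eval StrM e \<phi> \<in> {0, 3/4, 1}"
proof (induction \<phi> arbitrary: e)
  case (All v a)
  let ?F = "range (\<lambda>x. eval StrM (e(v := x)) a)"
  have "\<And>x. eval StrM (e(v := x)) a \<in> {0, 3/4, 1}" using All by simp
  then have "finite ?F" "?F \<subseteq> {0, 3/4, 1}" by (blast intro: finite_range_of_three_values)+
  then have "Inf ?F \<in> ?F" by (simp add: cInf_eq_Min)
  moreover have "eval StrM e (All v a) = Inf ?F" by (simp add: StrM_def)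
  ultimately show ?case using \<open>?F \<subseteq> {0, 3/4, 1}\<close> by auto
next
  case (Ex v a)
  let ?F = "range (\<lambda>x. eval StrM (e(v := x)) a)"
  have "\<And>x. eval StrM (e(v := x)) a \<in> {0, 3/4, 1}" using Ex by simp
  then have "finite ?F" "?F \<subseteq> {0, 3/4, 1}" by (blast intro: finite_range_of_three_values)+
  then have "Sup ?F \<in> ?F" by (simp add: cSup_eq_Max)
  moreover have "eval StrM e (Ex v a) = Sup ?F" by (simp add: StrM_def)
  ultimately show ?case using \<open>?F \<subseteq> {0, 3/4, 1}\<close> by auto
qed (auto simp: StrM_def g_imp_def min_def max_def)

lemma eval_StrN_eq_rescale: "no_consts \<phi> \<Longrightarrow> eval StrN e \<phi> = rescale (eval StrM e \<phi>)"
proof (induction \<phi> arbitrary: e)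
  case (All v a)
  let ?F = "range (\<lambda>x. eval StrM (e(v := x)) a)"
  have "finite ?F" using All.prems by (intro finite_range_of_three_values eval_StrM_range) simp
  have "eval StrN e (All v a) = Inf (rescale ` ?F)"
    using All by (simp add: StrN_def StrM_def image_image)
  also have "\<dots> = rescale (Inf ?F)" using \<open>finite ?F\<close> by (intro rescale_Inf) auto
  finally show ?case by (simp add: StrM_def)
next
  case (Ex v a)
  let ?F = "range (\<lambda>x. eval StrM (e(v := x)) a)"
  have "finite ?F" using Ex.prems by (intro finite_range_of_three_values eval_StrM_range) simp
  have "eval StrN e (Ex v a) = Sup (rescale ` ?F)"
    using Ex by (simp add: StrN_def StrM_def image_image)
  also have "\<dots> = rescale (Sup ?F)" using \<open>finite ?F\<close> by (intro rescale_Sup) auto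
  finally show ?case by (simp add: StrM_def)
qed (auto simp: StrM_def StrN_def rescale_min rescale_max rescale_g_imp)

lemma models_StrM_iff_models_StrN: "no_consts \<phi> \<Longrightarrow> models StrM \<phi> \<longleftrightarrow> models StrN \<phi>"
proof -
  assume "no_consts \<phi>"
  then have "eval StrN e \<phi> = 1 \<longleftrightarrow> eval StrM e \<phi> = 1" for e
    using eval_StrN_eq_rescale rescale_eq_iff[of _ 1] by simp
  then show ?thesis by (simp add: models_def StrM_def StrN_def)
qed

lemma models_phi0_iff:
  assumes "wf_struc S"
  shows "models S phi0 \<longleftrightarrow> (\<forall>x\<in>fst S. 3/4 \<le> snd S x)"
proof -
  have ne: "fst S \<noteq> {}" and vals: "\<forall>x\<in>fst S. snd S x \<in> Aset"
    using assms by (auto simp: wf_struc_def)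
  have bdd: "bdd_below (snd S ` fst S)"
    using vals by (intro bdd_belowI[of _ 0]) (auto simp: Aset_def)
  obtain x0 where x0: "x0 \<in> fst S" using ne by auto
  have "(INF x\<in>fst S. snd S x) \<le> snd S x0" using x0 by (rule cINF_lower[OF bdd])
  also have "\<dots> \<le> 1" using vals x0 by (auto simp: Aset_def)
  finally have inf_le_1: "(INF x\<in>fst S. snd S x) \<le> 1" .
  have "models S phi0 \<longleftrightarrow> g_imp (3/4) (INF x\<in>fst S. snd S x) = 1"
    using x0 by (auto simp: models_def phi0_def)
  also have "\<dots> \<longleftrightarrow> 3/4 \<le> (INF x\<in>fst S. snd S x)"
    using inf_le_1 by (auto simp: g_imp_def)
  also have "\<dots> \<longleftrightarrow> (\<forall>x\<in>fst S. 3/4 \<le> snd S x)"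
    using ne by (meson bdd cINF_greatest cINF_lower order_trans)
  finally show ?thesis .
qed

lemma classK_iff: "classK S \<longleftrightarrow> wf_struc S \<and> (\<forall>x\<in>fst S. 3/4 \<le> snd S x)"
  using models_phi0_iff classK_def by blast

lemma classK_isomorphic:
  assumes "classK S" "wf_struc T" "isomorphic S T"
  shows "classK T"
proof -
  obtain f where "bij_betw f (fst S) (fst T)" "\<forall>x\<in>fst S. snd T (f x) = snd S x"
    using assms(3) by (auto simp: isomorphic_def)
  moreover have "\<forall>x\<in>fst S. 3/4 \<le> snd S x" using assms(1) by (simp add: classK_iff)
  ultimately have "\<forall>y\<in>fst T. 3/4 \<le> snd T y" by (metis bij_betw_imp_surj_on imageE)
  then show ?thesis using assms(2) by (simp add: classK_iff)
qed

lemma classK_substructure: "classK S \<Longrightarrow> substructure T S \<Longrightarrow> classK T"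
  by (auto simp: classK_iff substructure_def wf_struc_def)

lemma ultrafilter_on_Int: "ultrafilter_on I U \<Longrightarrow> X \<in> U \<Longrightarrow> Y \<in> U \<Longrightarrow> X \<inter> Y \<in> U"
  by (simp add: ultrafilter_on_def)

lemma ultrafilter_on_Diff: "ultrafilter_on I U \<Longrightarrow> X \<subseteq> I \<Longrightarrow> X \<notin> U \<Longrightarrow> I - X \<in> U"
  unfolding ultrafilter_on_def by blast

lemma ultrafilter_on_nonempty: "ultrafilter_on I U \<Longrightarrow> X \<in> U \<Longrightarrow> \<exists>i. i \<in> X"
  unfolding ultrafilter_on_def by (metis ex_in_conv)

lemma ultrafilter_on_finite_range:
  assumes U: "ultrafilter_on I U" and "finite A" and range: "\<forall>i\<in>I. g i \<in> A"
  shows "\<exists>a\<in>A. {i \<in> I. g i = a} \<in> U"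
proof (rule ccontr)
  assume none: "\<not> (\<exists>a\<in>A. {i \<in> I. g i = a} \<in> U)"
  have "{i \<in> I. g i \<notin> B} \<in> U" if "finite B" "B \<subseteq> A" for B
    using that
  proof (induction B rule: finite_subset_induct)
    case empty
    then show ?case using U by (simp add: ultrafilter_on_def)
  next
    case (insert a B)
    have "{i \<in> I. g i = a} \<notin> U" using none insert.hyps(2) by blast
    then have "I - {i \<in> I. g i = a} \<in> U" by (intro ultrafilter_on_Diff[OF U]) auto
    then have "{i \<in> I. g i \<notin> B} \<inter> (I - {i \<in> I. g i = a}) \<in> U"
      using insert.IH by (rule ultrafilter_on_Int[OF U, rotated])
    moreover have "{i \<in> I. g i \<notin> B} \<inter> (I - {i \<in> I. g i = a}) = {i \<in> I. g i \<notin> insert a B}"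
      by auto
    ultimately show ?case by simp
  qed
  from this[OF \<open>finite A\<close> order_refl] have "{i \<in> I. g i \<notin> A} \<in> U" .
  moreover have "{i \<in> I. g i \<notin> A} = {}" using range by auto
  ultimately show False using U by (simp add: ultrafilter_on_def)
qed

lemma up_pred_attained:
  assumes U: "ultrafilter_on I U" and wf: "\<forall>i\<in>I. wf_struc (S i)" and c: "c \<in> up_dom I U S"
  shows "\<exists>i\<in>I. \<exists>x\<in>fst (S i). up_pred I U S c = snd (S i) x"
proof -
  obtain f where f: "\<forall>i\<in>I. f i \<in> fst (S i)" and c_def: "c = {g. (\<forall>i\<in>I. g i \<in> fst (S i)) \<and> up_rel I U f g}"
    using c by (auto simp: up_dom_def)
  have "f \<in> c" using f U by (simp add: c_def up_rel_def ultrafilter_on_def)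
  have "finite Aset" by (simp add: Aset_def)
  moreover have "\<forall>i\<in>I. snd (S i) (f i) \<in> Aset" using wf f by (simp add: wf_struc_def)
  ultimately have "\<exists>a\<in>Aset. {i \<in> I. snd (S i) (f i) = a} \<in> U"
    by (rule ultrafilter_on_finite_range[OF U])
  then obtain a where a: "a \<in> Aset" "{i \<in> I. snd (S i) (f i) = a} \<in> U" ..
  have "b = a" if b: "\<exists>g\<in>c. {i \<in> I. snd (S i) (g i) = b} \<in> U" for b
  proof -
    obtain g where g: "g \<in> c" "{i \<in> I. snd (S i) (g i) = b} \<in> U" using b by blast
    have "{i \<in> I. f i = g i} \<in> U" using g(1) by (simp add: c_def up_rel_def)
    then have "{i \<in> I. f i = g i} \<inter> {i \<in> I. snd (S i) (g i) = b} \<inter> {i \<in> I. snd (S i) (f i) = a} \<in> U"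
      using g(2) a(2) by (intro ultrafilter_on_Int[OF U])
    then show "b = a" using ultrafilter_on_nonempty[OF U] by fastforce
  qed
  then have "up_pred I U S c = a"
    unfolding up_pred_def using a \<open>f \<in> c\<close> by (intro the_equality) auto
  moreover obtain i where "i \<in> I" "snd (S i) (f i) = a"
    using ultrafilter_on_nonempty[OF U a(2)] by blast
  ultimately show ?thesis using f by metis
qed

lemma wf_struc_ultraproduct:
  assumes U: "ultrafilter_on I U" and wf: "\<forall>i\<in>I. wf_struc (S i)"
  shows "wf_struc (ultraproduct I U S)"
proof -
  have "(\<lambda>i. SOME x. x \<in> fst (S i)) \<in> {f. \<forall>i\<in>I. f i \<in> fst (S i)}"
    using wf by (simp add: wf_struc_def some_in_eq)
  then have "up_dom I U S \<noteq> {}" by (auto simp: up_dom_def)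
  then show ?thesis
    using up_pred_attained[OF U wf] wf by (fastforce simp: wf_struc_def ultraproduct_def)
qed

lemma classK_ultraproduct:
  assumes U: "ultrafilter_on I U" and K: "\<forall>i\<in>I. classK (S i)"
  shows "classK (ultraproduct I U S)"
proof -
  have wf: "\<forall>i\<in>I. wf_struc (S i)" using K by (simp add: classK_iff)
  show ?thesis
    using wf_struc_ultraproduct[OF U wf] up_pred_attained[OF U wf] K
    by (fastforce simp: classK_iff ultraproduct_def)
qed

lemma classK_StrM: "classK StrM"
  and not_classK_StrN: "\<not> classK StrN"
  by (simp_all add: classK_iff wf_struc_def StrM_def StrN_def Aset_def)

lemma classK_not_universally_axiomatized:
  "\<not> (\<exists>\<Sigma>. (\<forall>\<phi>\<in>\<Sigma>. universal_P_sentence \<phi>) \<and> axiomatized_by (classK :: nat struc \<Rightarrow> bool) \<Sigma>)"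
proof
  assume "\<exists>\<Sigma>. (\<forall>\<phi>\<in>\<Sigma>. universal_P_sentence \<phi>) \<and> axiomatized_by (classK :: nat struc \<Rightarrow> bool) \<Sigma>"
  then obtain \<Sigma> where univ: "\<forall>\<phi>\<in>\<Sigma>. universal_P_sentence \<phi>"
    and ax: "\<And>S :: nat struc. wf_struc S \<Longrightarrow> classK S \<longleftrightarrow> (\<forall>\<phi>\<in>\<Sigma>. models S \<phi>)"
    by (auto simp: axiomatized_by_def)
  have "wf_struc StrM" "wf_struc StrN"
    by (simp_all add: wf_struc_def StrM_def StrN_def Aset_def)
  moreover have "\<forall>\<phi>\<in>\<Sigma>. models StrM \<phi> \<longleftrightarrow> models StrN \<phi>"
    using univ models_StrM_iff_models_StrN
    by (simp add: universal_P_sentence_def P_sentence_def)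
  ultimately show False
    using ax classK_StrM not_classK_StrN by blast
qed

theorem mainTheorem6:
  shows "(\<forall>\<phi>. P_sentence \<phi> \<longrightarrow> (models StrM \<phi> \<longleftrightarrow> models StrN \<phi>))
    \<and> (\<forall>(S :: 'a struc) (T :: 'b struc).
          wf_struc S \<and> wf_struc T \<and> classK S \<and> isomorphic S T \<longrightarrow> classK T)
    \<and> (\<forall>(S :: 'a struc) T. classK S \<and> substructure T S \<longrightarrow> classK T)
    \<and> (\<forall>(I :: 'i set) U (S :: 'i \<Rightarrow> 'c struc).
          I \<noteq> {} \<and> ultrafilter_on I U \<and> (\<forall>i\<in>I. classK (S i))
          \<longrightarrow> classK (ultraproduct I U S))
    \<and> classK StrM
    \<and> \<not> classK StrN
    \<and> \<not> (\<exists>\<Sigma>. (\<forall>\<phi>\<in>\<Sigma>. universal_P_sentence \<phi>) \<and> axiomatized_by (classK :: nat struc \<Rightarrow> bool) \<Sigma>)"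
proof (intro conjI allI impI)
  show "models StrM \<phi> \<longleftrightarrow> models StrN \<phi>" if "P_sentence \<phi>" for \<phi>
    using that models_StrM_iff_models_StrN by (simp add: P_sentence_def)
qed (use classK_isomorphic classK_substructure classK_ultraproduct classK_StrM not_classK_StrN
      classK_not_universally_axiomatized in blast)+

end
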